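(* Every graph $G$ satisfies $\mathrm{cop}(G)\le \mathrm{circ}(G)/2$, where $\mathrm{circ}(G)$ is the circumference of $G$.
   Context: All graphs are finite, undirected, without loops or multiple edges. The circumference $\mathrm{circ}(G)$ of a graph is the length of its longest cycle, or $+\infty$ if it has no cycle. Cops and Robber game on a connected graph: for an integer $k\ge 1$, the cop player places $k$ cops on (not necessarily distinct) vertices, then the robber is placed on a vertex; then, starting with the cops, the players alternate moves. In a cop move, each cop either stays or moves to an adjacent vertex; in a robber move, the robber stays or moves to an adjacent vertex. The cops win if at some point a cop and the robber occupy the same vertex. Both players have complete information. The cop number $\mathrm{cop}(G)$ of a connected graph $G$ is the smallest $k$ such that the cops have a winning strategy with $k$ cops; for a non-connected graph it is the maximum cop number of its connected components. *)

theory Defs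
  imports Main "HOL-Library.Extended_Nat"
begin

definition simple_graph :: "'a set \<Rightarrow> ('a \<Rightarrow> 'a \<Rightarrow> bool) \<Rightarrow> bool" where
  "simple_graph V E \<longleftrightarrow> finite V \<and> (\<forall>u v. E u v \<longrightarrow> E v u)
     \<and> (\<forall>v. \<not> E v v) \<and> (\<forall>u v. E u v \<longrightarrow> u \<in> V \<and> v \<in> V)"

definition is_cycle :: "'a set \<Rightarrow> ('a \<Rightarrow> 'a \<Rightarrow> bool) \<Rightarrow> 'a list \<Rightarrow> bool" where
  "is_cycle V E xs \<longleftrightarrow> length xs \<ge> 3 \<and> distinct xs \<and> set xs \<subseteq> V
     \<and> (\<forall>i. Suc i < length xs \<longrightarrow> E (xs ! i) (xs ! Suc i))
     \<and> E (last xs) (hd xs)"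

definition circumference :: "'a set \<Rightarrow> ('a \<Rightarrow> 'a \<Rightarrow> bool) \<Rightarrow> enat" where
  "circumference V E =
     (if \<exists>xs. is_cycle V E xs
      then enat (Max {length xs | xs. is_cycle V E xs})
      else \<infinity>)"

definition cop_move :: "('a \<Rightarrow> 'a \<Rightarrow> bool) \<Rightarrow> 'a list \<Rightarrow> 'a list \<Rightarrow> bool" where
  "cop_move E cs cs' \<longleftrightarrow> list_all2 (\<lambda>c c'. c' = c \<or> E c c') cs cs'"

text \<open>\<open>cops_force V E cs r\<close>: it is the cops' turn, cops at cs, robber at r, and the cops
  can force capture in finitely many moves (least fixed point = winning region of the
  reachability game).\<close>

inductive cops_force :: "'a set \<Rightarrow> ('a \<Rightarrow> 'a \<Rightarrow> bool) \<Rightarrow> 'a list \<Rightarrow> 'a \<Rightarrow> bool"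
  for V :: "'a set" and E :: "'a \<Rightarrow> 'a \<Rightarrow> bool" where
  caught: "r \<in> set cs \<Longrightarrow> cops_force V E cs r"
| move: "cop_move E cs cs' \<Longrightarrow>
          (r \<in> set cs' \<or> (\<forall>r'. (r' = r \<or> E r r') \<longrightarrow> (r' \<in> set cs' \<or> cops_force V E cs' r')))
          \<Longrightarrow> cops_force V E cs r"

definition cops_win :: "'a set \<Rightarrow> ('a \<Rightarrow> 'a \<Rightarrow> bool) \<Rightarrow> nat \<Rightarrow> bool" where
  "cops_win V E k \<longleftrightarrow>
     (\<exists>cs. length cs = k \<and> set cs \<subseteq> V \<and> (\<forall>r\<in>V. cops_force V E cs r))"

definition component_of :: "'a set \<Rightarrow> ('a \<Rightarrow> 'a \<Rightarrow> bool) \<Rightarrow> 'a \<Rightarrow> 'a set" where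
  "component_of V E v = {u \<in> V. (\<lambda>x y. x \<in> V \<and> y \<in> V \<and> E x y)\<^sup>*\<^sup>* v u}"

definition components :: "'a set \<Rightarrow> ('a \<Rightarrow> 'a \<Rightarrow> bool) \<Rightarrow> 'a set set" where
  "components V E = component_of V E ` V"

definition induced :: "'a set \<Rightarrow> ('a \<Rightarrow> 'a \<Rightarrow> bool) \<Rightarrow> 'a \<Rightarrow> 'a \<Rightarrow> bool" where
  "induced C E = (\<lambda>x y. x \<in> C \<and> y \<in> C \<and> E x y)"

definition cop_number_connected :: "'a set \<Rightarrow> ('a \<Rightarrow> 'a \<Rightarrow> bool) \<Rightarrow> nat" where
  "cop_number_connected V E = (LEAST k. 1 \<le> k \<and> cops_win V E k)"

definition cop_number :: "'a set \<Rightarrow> ('a \<Rightarrow> 'a \<Rightarrow> bool) \<Rightarrow> nat" where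
  "cop_number V E =
     Max (insert 0 ((\<lambda>C. cop_number_connected C (induced C E)) ` components V E))"

end

theory Submission
  imports Defs
begin

text \<open>
  It suffices to treat a connected component, with \<open>c\<close> the circumference. The
  \<open>c div 2\<close> cops guard a path \<open>P\<close> that the robber cannot enter: they stand on every
  second vertex among the last \<open>c\<close> vertices of \<open>P\<close>, so each of these vertices is dominated. The robber lives in a
  component of \<open>G - P\<close> attached to the last vertex of \<open>P\<close> through a neighbour \<open>z\<close>. In each
  round the path is extended by \<open>z\<close> and every cop advances one step along it. A robber
  adjacent to \<open>P ! i\<close> closes a cycle through \<open>P ! i\<close>, the end of \<open>P\<close> and his component, so
  \<open>P ! i\<close> is among the last \<open>c\<close> vertices of \<open>P\<close>: stepping onto the path means capture.
  Since the path grows in every round, the robber is caught after at most \<open>|V|\<close> rounds.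
\<close>

lemma rtranclp_induced_in: "(induced S E)\<^sup>*\<^sup>* a b \<Longrightarrow> a \<in> S \<Longrightarrow> b \<in> S"
  by (induction rule: rtranclp_induct) (auto simp: induced_def)

lemma rtranclp_induced_simple_path:
  assumes "(induced S E)\<^sup>*\<^sup>* a b" "a \<in> S"
  shows "\<exists>Q. Q \<noteq> [] \<and> hd Q = a \<and> last Q = b \<and> distinct Q \<and> set Q \<subseteq> S \<and> successively E Q"
  using assms
proof (induction rule: rtranclp_induct)
  case base
  show ?case by (intro exI[of _ "[a]"]) (simp add: base)
next
  case (step y b)
  then obtain Q where Q: "Q \<noteq> []" "hd Q = a" "last Q = y" "distinct Q" "set Q \<subseteq> S"
      "successively E Q"
    by blast
  show ?case
  proof (cases "b \<in> set Q")
    case True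
    then obtain ys zs where Q_split: "Q = ys @ b # zs" by (meson split_list)
    then have "successively E (ys @ [b])"
      using Q(6) by (simp add: successively_append_iff successively_Cons)
    then show ?thesis
      using Q Q_split by (intro exI[of _ "ys @ [b]"]) (cases ys; auto)
  next
    case False
    then show ?thesis
      using Q step(2) by (intro exI[of _ "Q @ [b]"]) (auto simp: successively_append_iff induced_def)
  qed
qed

lemma rtranclp_induced_last_edge:
  assumes "(induced S E)\<^sup>*\<^sup>* a b" "a \<noteq> b"
  shows "\<exists>y. (induced (S - {b}) E)\<^sup>*\<^sup>* a y \<and> y \<in> S - {b} \<and> E y b"
  using assms
proof (induction rule: converse_rtranclp_induct)
  case base
  then show ?case by simp
next
  case (step a a')
  show ?case
  proof (cases "a' = b")
    case True
    then show ?thesis using step by (auto simp: induced_def)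
  next
    case False
    then obtain y where y: "(induced (S - {b}) E)\<^sup>*\<^sup>* a' y" "y \<in> S - {b}" "E y b"
      using step by blast
    have "induced (S - {b}) E a a'" using step False by (auto simp: induced_def)
    then show ?thesis using y by (meson converse_rtranclp_into_rtranclp)
  qed
qed

lemma rtranclp_induced_step_avoiding:
  assumes sym: "\<And>u v. E u v \<Longrightarrow> E v u"
    and rz: "(induced S E)\<^sup>*\<^sup>* r z" and r: "r \<in> S"
    and r': "r' \<in> S - {z}" "r' = r \<or> E r r'"
  shows "\<exists>z'. (induced (S - {z}) E)\<^sup>*\<^sup>* r' z' \<and> E z' z"
proof (cases "r = z")
  case True
  then show ?thesis using r' sym by blast
next
  case False
  obtain y where y: "(induced (S - {z}) E)\<^sup>*\<^sup>* r y" "E y z"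
    using rtranclp_induced_last_edge[OF rz False] by blast
  have "(induced (S - {z}) E)\<^sup>*\<^sup>* r' r"
    using r r' False sym by (auto simp: induced_def)
  then show ?thesis using y by (meson rtranclp_trans)
qed

lemma guard_index_near:
  fixes L i c :: nat
  assumes "i < L" "L - i \<le> c" "2 \<le> c"
  shows "\<exists>j < c div 2. L - 1 - (2 * j + 1) = i \<or> Suc (L - 1 - (2 * j + 1)) = i
                        \<or> L - 1 - (2 * j + 1) = Suc i"
proof -
  define d where "d = L - 1 - i"
  have L: "L - 1 = d + i" using assms(1) d_def by simp
  have "d = 0 \<or> (\<exists>q. d = 2 * q + 1) \<or> (\<exists>q. d = 2 * q + 2)" by presburger
  then have "L - 1 - (2 * ((d - 1) div 2) + 1) = i \<or> Suc (L - 1 - (2 * ((d - 1) div 2) + 1)) = i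
      \<or> L - 1 - (2 * ((d - 1) div 2) + 1) = Suc i"
    unfolding L by auto
  moreover have "(d - 1) div 2 < c div 2" using assms d_def by linarith
  ultimately show ?thesis by blast
qed

locale circumference_bounded_graph =
  fixes V :: "'a set" and E :: "'a \<Rightarrow> 'a \<Rightarrow> bool" and c :: nat
  assumes finite_V: "finite V"
    and sym: "E u v \<Longrightarrow> E v u"
    and edges_in_V: "E u v \<Longrightarrow> u \<in> V \<and> v \<in> V"
    and cycle_length_le: "is_cycle V E xs \<Longrightarrow> length xs \<le> c"
    and two_le_c: "2 \<le> c"
begin

text \<open>Cop \<open>j\<close> stands on \<open>P ! (length P - 2 - 2 * j)\<close>; truncated subtraction parks the
  surplus cops on the first vertex of \<open>P\<close>.\<close>

definition guard :: "'a list \<Rightarrow> 'a list" where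
  "guard P = map (\<lambda>j. P ! (length P - 1 - (2 * j + 1))) [0..<c div 2]"

lemma length_guard [simp]: "length (guard P) = c div 2"
  by (simp add: guard_def)

lemma detour_bound:
  assumes P: "successively E P" "distinct P" "set P \<subseteq> V" and i: "i < length P"
    and r: "r \<in> V - set P" and rz: "(induced (V - set P) E)\<^sup>*\<^sup>* r z" and z: "E z (last P)"
    and ri: "E r (P ! i)"
  shows "length P - i + 1 \<le> c"
proof (cases "Suc i < length P")
  case False
  then show ?thesis using i two_le_c by simp
next
  case True
  obtain Q where Q: "Q \<noteq> []" "hd Q = r" "last Q = z" "distinct Q" "set Q \<subseteq> V - set P"
      "successively E Q"
    using rtranclp_induced_simple_path[OF rz r] by blast
  define xs where "xs = drop i P @ rev Q"
  have "successively E (drop i P)"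
    using P(1) by (metis append_take_drop_id successively_append_iff)
  moreover have "successively E (rev Q)"
    using Q(6) sym by (auto intro: successively_mono)
  ultimately have "successively E xs"
    using Q(1,3) z True sym by (auto simp: xs_def successively_append_iff last_drop hd_rev)
  moreover have "distinct xs" "set xs \<subseteq> V"
    using P(2,3) Q(4,5) set_drop_subset[of i P] by (auto simp: xs_def)
  moreover have "E (last xs) (hd xs)"
    using Q(1,2) ri i by (simp add: xs_def last_rev hd_drop_conv_nth)
  moreover have "length xs = length P - i + length Q" by (simp add: xs_def)
  moreover have "length Q \<ge> 1" using Q(1) by (cases Q) auto
  ultimately have "is_cycle V E xs" "length xs = length P - i + length Q"
    using True by (auto simp: is_cycle_def successively_conv_nth)
  then show ?thesis using cycle_length_le[of xs] \<open>length Q \<ge> 1\<close> by linarith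
qed

lemma guard_catches_near_end:
  assumes P: "successively E P" and i: "i < length P" "length P - i \<le> c"
  shows "cops_force V E (guard P) (P ! i)"
proof -
  obtain j where j: "j < c div 2"
    and near: "length P - 1 - (2 * j + 1) = i \<or> Suc (length P - 1 - (2 * j + 1)) = i
               \<or> length P - 1 - (2 * j + 1) = Suc i"
    using guard_index_near[OF i two_le_c] by blast
  have guard_j: "guard P ! j = P ! (length P - 1 - (2 * j + 1))"
    using j by (simp add: guard_def)
  have "P ! i = guard P ! j \<or> E (guard P ! j) (P ! i)"
    using near P i sym unfolding guard_j by (auto simp: successively_conv_nth)
  then have "cop_move E (guard P) ((guard P)[j := P ! i])"
    using j by (auto simp: cop_move_def list_all2_conv_all_nth nth_list_update)
  moreover have "P ! i \<in> set ((guard P)[j := P ! i])"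
    using j by (simp add: set_update_memI)
  ultimately show ?thesis by (meson cops_force.move)
qed

lemma cop_move_guard_extend:
  assumes "successively E (P @ [z])" "P \<noteq> []"
  shows "cop_move E (guard P) (guard (P @ [z]))"
  unfolding cop_move_def list_all2_conv_all_nth
proof (intro conjI allI impI)
  fix j assume "j < length (guard P)"
  then have j: "j < c div 2" by simp
  define a where "a = length P - 1 - (2 * j + 1)"
  have a: "a < length P" using assms(2) by (simp add: a_def)
  have "guard P ! j = (P @ [z]) ! a" "guard (P @ [z]) ! j = (P @ [z]) ! (length P - (2 * j + 1))"
    using j a by (simp_all add: guard_def nth_append a_def)
  moreover have "length P - (2 * j + 1) = a \<or> length P - (2 * j + 1) = Suc a"
    unfolding a_def by linarith
  ultimately show "guard (P @ [z]) ! j = guard P ! j \<or> E (guard P ! j) (guard (P @ [z]) ! j)"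
    using assms(1) a by (auto simp: successively_conv_nth)
qed simp

lemma guard_wins_against_attached_robber:
  assumes "successively E P" "distinct P" "P \<noteq> []" "set P \<subseteq> V"
    and "r \<in> V - set P" "(induced (V - set P) E)\<^sup>*\<^sup>* r z" "E z (last P)"
  shows "cops_force V E (guard P) r"
  using assms
proof (induction "card V - length P" arbitrary: P r z rule: less_induct)
  case less
  note P = less.prems(1-4) and r = less.prems(5) and rz = less.prems(6) and z = less.prems(7)
  define P' where "P' = P @ [z]"
  have z_out: "z \<in> V - set P" using rtranclp_induced_in[OF rz r] .
  have P': "successively E P'" "distinct P'" "set P' \<subseteq> V"
    using P z_out z sym by (auto simp: P'_def successively_append_iff)
  have shorter: "card V - length P' < card V - length P"
    using distinct_card[OF P'(2)] card_mono[OF finite_V P'(3)] by (simp add: P'_def)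
  have "cop_move E (guard P) (guard P')"
    using cop_move_guard_extend P'(1) P(3) by (simp add: P'_def)
  then show ?case
  proof (rule cops_force.move, intro disjI2 allI impI)
    fix r' assume r'_move: "r' = r \<or> E r r'"
    have r'_in: "r' \<in> V" using r'_move r edges_in_V by auto
    show "cops_force V E (guard P') r'"
    proof (cases "r' \<in> set P'")
      case True
      then obtain i where i: "i < length P'" "r' = P' ! i" by (metis in_set_conv_nth)
      have "length P' - i \<le> c"
      proof (cases "i = length P")
        case True
        then show ?thesis using two_le_c by (simp add: P'_def)
      next
        case False
        then have i_P: "i < length P" "P' ! i = P ! i"
          using i(1) by (simp_all add: P'_def nth_append)
        then have "E r (P ! i)" using r r'_move i(2) by (metis DiffD2 nth_mem)
        from detour_bound[OF P(1,2,4) i_P(1) r rz z this] show ?thesis by (simp add: P'_def)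
      qed
      then show ?thesis using guard_catches_near_end[OF P'(1) i(1)] i(2) by (simp add: P'_def)
    next
      case False
      then have r'_out: "r' \<in> V - set P - {z}" using r'_in by (simp add: P'_def)
      then obtain z' where "(induced (V - set P - {z}) E)\<^sup>*\<^sup>* r' z'" "E z' z"
        using rtranclp_induced_step_avoiding[OF sym rz r _ r'_move] by blast
      moreover have "V - set P' = V - set P - {z}" "P' \<noteq> []" "last P' = z"
        by (auto simp: P'_def)
      ultimately show ?thesis
        using less.hyps[OF shorter P'(1,2) _ P'(3)] r'_out by simp
    qed
  qed
qed

lemma cops_win_half_circumference:
  assumes "V \<noteq> {}" and connected: "\<And>u w. u \<in> V \<Longrightarrow> w \<in> V \<Longrightarrow> (induced V E)\<^sup>*\<^sup>* u w"
  shows "cops_win V E (c div 2)"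
proof -
  obtain v where v: "v \<in> V" using assms(1) by blast
  have guard_v: "guard [v] = replicate (c div 2) v"
    by (simp add: guard_def list_eq_iff_nth_eq)
  have "cops_force V E (guard [v]) r" if r: "r \<in> V" for r
  proof (cases "r = v")
    case True
    then show ?thesis using guard_v two_le_c by (simp add: cops_force.caught)
  next
    case False
    then obtain y where "(induced (V - {v}) E)\<^sup>*\<^sup>* r y" "E y v"
      using rtranclp_induced_last_edge[OF connected[OF r v]] by blast
    then show ?thesis
      using guard_wins_against_attached_robber[of "[v]" r y] r v False by simp
  qed
  then show ?thesis
    unfolding cops_win_def using guard_v v by (intro exI[of _ "guard [v]"]) auto
qed

end

lemma induced_induced [simp]: "induced C (induced C E) = induced C E"
  by (auto simp: induced_def)

lemma rtranclp_component_of: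
  assumes "u \<in> component_of V E v"
  shows "(induced (component_of V E v) E)\<^sup>*\<^sup>* v u"
proof -
  have "(induced V E)\<^sup>*\<^sup>* v u" using assms by (simp add: component_of_def induced_def)
  then show ?thesis
  proof (induction rule: rtranclp_induct)
    case (step y u)
    then have "y \<in> component_of V E v" "u \<in> component_of V E v"
      by (auto simp: component_of_def induced_def intro: rtranclp.rtrancl_into_rtrancl)
    then have "induced (component_of V E v) E y u"
      using step(2) by (simp add: induced_def)
    with step(3) show ?case by (rule rtranclp.rtrancl_into_rtrancl)
  qed simp
qed

lemma component_connected:
  assumes sym: "\<And>u v. E u v \<Longrightarrow> E v u"
    and C: "C \<in> components V E" and "u \<in> C" "w \<in> C"
  shows "(induced C E)\<^sup>*\<^sup>* u w"
proof -
  obtain v where C_def: "C = component_of V E v" using C by (auto simp: components_def)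
  have "symp (induced C E)" using sym by (auto simp: symp_def induced_def)
  then show ?thesis
    using rtranclp_component_of[of _ V E v] assms(3,4) unfolding C_def
    by (meson rtranclp_trans sympD symp_rtranclp)
qed

lemma component_circumference_bounded:
  assumes G: "simple_graph V E" and C: "C \<in> components V E"
    and cycles: "\<And>xs. is_cycle V E xs \<Longrightarrow> length xs \<le> c" and "2 \<le> c"
  shows "circumference_bounded_graph C (induced C E) c"
proof
  have "C \<subseteq> V" using C by (auto simp: components_def component_of_def)
  then show "finite C" using G finite_subset by (auto simp: simple_graph_def)
  fix xs assume "is_cycle C (induced C E) xs"
  then have "is_cycle V E xs" using \<open>C \<subseteq> V\<close> by (auto simp: is_cycle_def induced_def)
  then show "length xs \<le> c" by (rule cycles)
qed (use G assms(4) in \<open>auto simp: simple_graph_def induced_def\<close>)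

lemma components_nonempty: "C \<in> components V E \<Longrightarrow> C \<noteq> {}"
  by (auto simp: components_def component_of_def)

lemma cop_number_le:
  assumes G: "simple_graph V E" and "1 \<le> k"
    and win: "\<And>C. C \<in> components V E \<Longrightarrow> cops_win C (induced C E) k"
  shows "cop_number V E \<le> k"
proof -
  have "cop_number_connected C (induced C E) \<le> k" if "C \<in> components V E" for C
    using win[OF that] \<open>1 \<le> k\<close> by (simp add: cop_number_connected_def Least_le)
  moreover have "finite (components V E)"
    using G by (simp add: components_def simple_graph_def)
  ultimately show ?thesis by (simp add: cop_number_def)
qed

lemma circumference_attained:
  assumes G: "simple_graph V E" and "is_cycle V E ys"
  obtains c where "circumference V E = enat c" "3 \<le> c"
    "\<And>xs. is_cycle V E xs \<Longrightarrow> length xs \<le> c"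
proof -
  define L where "L = {length xs | xs. is_cycle V E xs}"
  have "L \<subseteq> {..card V}"
    using G by (auto simp: L_def is_cycle_def simple_graph_def
        intro: order_trans[OF distinct_card[symmetric, THEN eq_imp_le] card_mono])
  then have "finite L" by (rule finite_subset) simp
  then have "length xs \<le> Max L" if "is_cycle V E xs" for xs
    using that by (auto simp: L_def intro: Max_ge)
  moreover have "circumference V E = enat (Max L)"
    using assms(2) by (auto simp: circumference_def L_def)
  moreover have "3 \<le> Max L"
    using calculation(1)[OF assms(2)] assms(2) by (simp add: is_cycle_def)
  ultimately show ?thesis using that by blast
qed

theorem corollary15:
  fixes V :: "'a set" and E :: "'a \<Rightarrow> 'a \<Rightarrow> bool"
  assumes "simple_graph V E"
  shows "2 * enat (cop_number V E) \<le> circumference V E"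
proof (cases "\<exists>xs. is_cycle V E xs")
  case False
  then show ?thesis by (simp add: circumference_def del: not_ex)
next
  case True
  have E_sym: "\<And>u v. E u v \<Longrightarrow> E v u" using assms by (simp add: simple_graph_def)
  from True obtain ys where "is_cycle V E ys" by blast
  then obtain c where circ: "circumference V E = enat c" and "3 \<le> c"
    and cycles: "\<And>xs. is_cycle V E xs \<Longrightarrow> length xs \<le> c"
    using circumference_attained[OF assms] by blast
  have "cops_win C (induced C E) (c div 2)" if C: "C \<in> components V E" for C
  proof -
    interpret circumference_bounded_graph C "induced C E" c
      using component_circumference_bounded[OF assms C cycles] \<open>3 \<le> c\<close> by simp
    show ?thesis
      using cops_win_half_circumference components_nonempty[OF C]
        component_connected[OF E_sym C] by simp
  qed
  then have "cop_number V E \<le> c div 2"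
    using cop_number_le[OF assms] \<open>3 \<le> c\<close> by simp
  then show ?thesis by (simp add: circ numeral_eq_enat)
qed

end
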